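(* Let $\mathcal{H}_n$ be an $n$-dimensional Hilbert space, let $F=\{f_i\}_{i=1}^N$ be a frame for $\mathcal{H}_n$ that admits a $1$-uniform dual, and let $p>1$. A dual frame $G=\{g_i\}_{i=1}^N$ of $F$ is a $1$-erasure spectrally optimal dual of $F$ (i.e. $G\in\zeta_{\mathfrak{R}}^{(1),p}(F)$) if and only if $G$ is a $1$-uniform dual of $F$.
   Context: $G=\{g_i\}$ is a dual of the frame $F$ if $f=\sum_i\langle f,f_i\rangle g_i$ for all $f\in\mathcal{H}_n$. A dual $G$ is $1$-uniform if $\langle f_i,g_i\rangle$ is the same constant for all $i$ (necessarily $n/N$). For a dual $G$, $\mathrm{AE}_{\mathfrak{R}}^{(1),p}(F,G)=\{\frac1N\sum_{i=1}^N\rho(E_i)^p\}^{1/p}=\{\frac1N\sum_{i=1}^N|\langle f_i,g_i\rangle|^p\}^{1/p}$, where $E_if=\langle f,f_i\rangle g_i$ is the one-erasure error operator and $\rho$ the spectral radius. $\zeta_{\mathfrak{R}}^{(1),p}(F)$ is the set of duals of $F$ minimizing $\mathrm{AE}_{\mathfrak{R}}^{(1),p}(F,\cdot)$ over all duals of $F$. *)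

theory Defs
  imports "HOL-Analysis.Analysis"
begin

text \<open>The n-dimensional Hilbert space H_n is modelled as complex^'n (n = CARD('n))
  with the standard inner product, linear in the first argument.\<close>

definition cinner :: "complex ^ 'n \<Rightarrow> complex ^ 'n \<Rightarrow> complex" where
  "cinner x y = (\<Sum>j\<in>UNIV. x $ j * cnj (y $ j))"

definition cnorm :: "complex ^ 'n \<Rightarrow> real" where
  "cnorm x = sqrt (Re (cinner x x))"

definition is_frame :: "nat \<Rightarrow> (nat \<Rightarrow> complex ^ 'n) \<Rightarrow> bool" where
  "is_frame N F \<longleftrightarrow> (\<exists>A B. 0 < A \<and> A \<le> B \<and>
     (\<forall>f. A * (cnorm f)\<^sup>2 \<le> (\<Sum>i<N. (cmod (cinner f (F i)))\<^sup>2) \<and>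
          (\<Sum>i<N. (cmod (cinner f (F i)))\<^sup>2) \<le> B * (cnorm f)\<^sup>2))"

definition is_dual :: "nat \<Rightarrow> (nat \<Rightarrow> complex ^ 'n) \<Rightarrow> (nat \<Rightarrow> complex ^ 'n) \<Rightarrow> bool" where
  "is_dual N F G \<longleftrightarrow> (\<forall>f. f = (\<Sum>i<N. cinner f (F i) *s G i))"

definition is_uniform_dual :: "nat \<Rightarrow> (nat \<Rightarrow> complex ^ 'n) \<Rightarrow> (nat \<Rightarrow> complex ^ 'n) \<Rightarrow> bool" where
  "is_uniform_dual N F G \<longleftrightarrow> is_dual N F G \<and> (\<exists>c. \<forall>i<N. cinner (F i) (G i) = c)"

definition AE1 :: "real \<Rightarrow> nat \<Rightarrow> (nat \<Rightarrow> complex ^ 'n) \<Rightarrow> (nat \<Rightarrow> complex ^ 'n) \<Rightarrow> real" where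
  "AE1 p N F G = ((1 / real N) * (\<Sum>i<N. cmod (cinner (F i) (G i)) powr p)) powr (1 / p)"

definition spectrally_optimal_dual :: "real \<Rightarrow> nat \<Rightarrow> (nat \<Rightarrow> complex ^ 'n) \<Rightarrow> (nat \<Rightarrow> complex ^ 'n) \<Rightarrow> bool" where
  "spectrally_optimal_dual p N F G \<longleftrightarrow> is_dual N F G \<and>
     (\<forall>G'. is_dual N F G' \<longrightarrow> AE1 p N F G \<le> AE1 p N F G')"

end

theory Submission
  imports Defs
begin

text \<open>Evaluating the reconstruction formula of any dual on the standard basis shows that the
  diagonal entries \<open>\<langle>f\<^sub>i, g\<^sub>i\<rangle>\<close> always sum to the trace \<open>n\<close> of the identity. By strict convexity
  of \<open>t \<mapsto> t\<^sup>p\<close> (tangent line at \<open>n/N\<close>), complex numbers summing to \<open>n\<close> have \<open>p\<close>-th power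
  mean of their moduli at least \<open>n/N\<close>, with equality exactly when all of them equal \<open>n/N\<close>.
  Hence \<open>n/N\<close> is a lower bound for the averaged error, attained precisely by the 1-uniform
  duals; since one of these exists, the bound is the minimum.\<close>

lemma powr_gt_tangent:
  fixes x a p :: real
  assumes "0 \<le> x" "0 < a" "x \<noteq> a" "1 < p"
  shows "a powr p + p * a powr (p - 1) * (x - a) < x powr p"
proof (cases "x = 0")
  case True
  have "a powr p = a powr (p - 1) * a"
    using assms by (simp add: powr_diff)
  then show ?thesis
    using True assms by (simp add: algebra_simps)
next
  case False
  have deriv: "((\<lambda>y. y powr p) has_real_derivative p * y powr (p - 1)) (at y)" if "0 < y" for y
    using that by (auto intro!: derivative_eq_intros)
  obtain z where z: "min x a < z" "z < max x a"
    and mvt: "x powr p - a powr p = (x - a) * (p * z powr (p - 1))"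
  proof (cases "x < a")
    case True
    then show ?thesis
      using MVT2[of x a "\<lambda>y. y powr p" "\<lambda>y. p * y powr (p - 1)"] deriv assms False that
      by (force simp: algebra_simps)
  next
    case False
    then show ?thesis
      using MVT2[of a x "\<lambda>y. y powr p" "\<lambda>y. p * y powr (p - 1)"] deriv assms that
      by force
  qed
  have "(x - a) * (z powr (p - 1) - a powr (p - 1)) > 0"
  proof (cases "x < a")
    case True
    then show ?thesis
      using z powr_less_mono2[of "p - 1" z a] assms by (simp add: mult_neg_neg)
  next
    case False
    then show ?thesis
      using z powr_less_mono2[of "p - 1" a z] assms by simp
  qed
  then have "0 < p * ((x - a) * (z powr (p - 1) - a powr (p - 1)))"
    using assms by simp
  then show ?thesis
    using mvt by (simp add: algebra_simps)
qed

lemma sum_powr_gt_card_mult_powr: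
  fixes r :: "'a \<Rightarrow> real"
  assumes "finite I" "\<forall>i\<in>I. 0 \<le> r i" "real (card I) * a \<le> (\<Sum>i\<in>I. r i)"
    and "0 < a" "1 < p" "j \<in> I" "r j \<noteq> a"
  shows "real (card I) * a powr p < (\<Sum>i\<in>I. r i powr p)"
proof -
  define m where "m = p * a powr (p - 1)"
  have tangent: "a powr p + m * (r i - a) \<le> r i powr p" if "i \<in> I" for i
    using powr_gt_tangent[of "r i" a p] that assms unfolding m_def
    by (cases "r i = a") auto
  have "m \<ge> 0"
    using assms by (simp add: m_def)
  then have "real (card I) * a powr p \<le> real (card I) * a powr p + m * ((\<Sum>i\<in>I. r i) - card I * a)"
    using assms by simp
  also have "\<dots> = (\<Sum>i\<in>I. a powr p + m * (r i - a))"
    by (simp add: sum.distrib sum_distrib_left sum_subtractf algebra_simps)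
  also have "\<dots> < (\<Sum>i\<in>I. r i powr p)"
  proof (rule sum_strict_mono_ex1[OF assms(1)])
    show "\<exists>i\<in>I. a powr p + m * (r i - a) < r i powr p"
      using powr_gt_tangent[of "r j" a p] assms unfolding m_def by blast
  qed (use tangent in blast)
  finally show ?thesis .
qed

lemma sum_powr_ge_card_mult_powr:
  fixes r :: "'a \<Rightarrow> real"
  assumes "finite I" "\<forall>i\<in>I. 0 \<le> r i" "real (card I) * a \<le> (\<Sum>i\<in>I. r i)"
    and "0 < a" "1 < p"
  shows "real (card I) * a powr p \<le> (\<Sum>i\<in>I. r i powr p)"
proof (cases "\<exists>j\<in>I. r j \<noteq> a")
  case True
  then show ?thesis
    using sum_powr_gt_card_mult_powr[OF assms(1-3)] assms by fastforce
qed simp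

lemma sum_eq_of_real_card_mult_imp_const:
  fixes c :: "'a \<Rightarrow> complex"
  assumes "finite I" "\<forall>i\<in>I. cmod (c i) \<le> a" "(\<Sum>i\<in>I. c i) = of_real (real (card I) * a)"
  shows "\<forall>i\<in>I. c i = of_real a"
proof
  fix i assume i: "i \<in> I"
  have Re_le: "Re (c j) \<le> a" if "j \<in> I" for j
    using complex_Re_le_cmod[of "c j"] assms(2) that by fastforce
  have "(\<Sum>j\<in>I. a - Re (c j)) = 0"
    using arg_cong[OF assms(3), of Re] by (simp add: sum_subtractf Re_sum)
  then have Re: "Re (c i) = a"
    using sum_nonneg_eq_0_iff[OF assms(1), of "\<lambda>j. a - Re (c j)"] Re_le i by auto
  have "(Re (c i))\<^sup>2 + (Im (c i))\<^sup>2 \<le> a\<^sup>2"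
  proof -
    have "cmod (c i) ^ 2 \<le> a ^ 2"
      using assms(2) i by (simp add: power_mono)
    then show ?thesis
      by (simp add: cmod_power2)
  qed
  then have "Im (c i) = 0"
    using Re by simp
  with Re show "c i = of_real a"
    by (simp add: complex_eq_iff)
qed

lemma cinner_axis_left: "cinner (axis j 1) y = cnj (y $ j)"
proof -
  have "cinner (axis j 1) y = (\<Sum>k\<in>UNIV. if k = j then cnj (y $ k) else 0)"
    unfolding cinner_def axis_def by (intro sum.cong) auto
  then show ?thesis
    by simp
qed

lemma cnj_cinner: "cnj (cinner x y) = cinner y x"
  unfolding cinner_def by (simp add: mult.commute)

lemma is_dual_imp_pos:
  assumes "is_dual N F (G :: nat \<Rightarrow> complex ^ 'n)"
  shows "0 < N"
proof (rule ccontr)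
  assume "\<not> 0 < N"
  with assms have "axis (undefined :: 'n) (1 :: complex) = 0"
    unfolding is_dual_def by auto
  then show False
    by (metis axis_nth zero_index zero_neq_one)
qed

lemma is_dual_sum_cinner:
  assumes "is_dual N F (G :: nat \<Rightarrow> complex ^ 'n)"
  shows "(\<Sum>i<N. cinner (F i) (G i)) = of_nat CARD('n)"
proof -
  have coordinate: "(\<Sum>i<N. cnj (F i $ j) * G i $ j) = 1" for j
  proof -
    have "axis j (1 :: complex) = (\<Sum>i<N. cinner (axis j 1) (F i) *s G i)"
      using assms unfolding is_dual_def by blast
    from arg_cong[OF this, of "\<lambda>v. v $ j"] show ?thesis
      by (simp add: cinner_axis_left)
  qed
  have "(\<Sum>i<N. cinner (G i) (F i)) = (\<Sum>j\<in>UNIV. \<Sum>i<N. cnj (F i $ j) * G i $ j)"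
    unfolding cinner_def by (subst sum.swap) (simp add: mult.commute)
  also have "\<dots> = of_nat CARD('n)"
    by (simp add: coordinate)
  finally show ?thesis
    by (metis (no_types) cnj_cinner cnj_sum complex_cnj_of_nat sum.cong)
qed

lemma is_uniform_dual_cinner:
  assumes "is_uniform_dual N F (G :: nat \<Rightarrow> complex ^ 'n)" "i < N"
  shows "cinner (F i) (G i) = of_real (real CARD('n) / N)"
proof -
  obtain c where c: "\<forall>i<N. cinner (F i) (G i) = c" and dual: "is_dual N F G"
    using assms(1) unfolding is_uniform_dual_def by blast
  have "of_nat N * c = of_nat CARD('n)"
    using is_dual_sum_cinner[OF dual] c by simp
  then show ?thesis
    using is_dual_imp_pos[OF dual] c assms(2) by (simp add: field_simps)
qed

lemma AE1_is_uniform_dual: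
  assumes "is_uniform_dual N F (G :: nat \<Rightarrow> complex ^ 'n)" "0 < p"
  shows "AE1 p N F G = real CARD('n) / N"
proof -
  have "0 < N"
    using assms(1) is_dual_imp_pos unfolding is_uniform_dual_def by blast
  then have "AE1 p N F G = ((real CARD('n) / N) powr p) powr (1 / p)"
    unfolding AE1_def using is_uniform_dual_cinner[OF assms(1)]
    by (simp del: of_real_divide of_real_of_nat_eq)
  then show ?thesis
    using assms(2) by (simp add: powr_powr)
qed

lemma dim_div_length_le_AE1:
  assumes "is_dual N F (G :: nat \<Rightarrow> complex ^ 'n)" "1 < p"
  shows "real CARD('n) / N \<le> AE1 p N F G"
proof -
  define r where "r i = cmod (cinner (F i) (G i))" for i
  have N: "0 < N"
    using assms(1) by (rule is_dual_imp_pos)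
  have "real (card {..<N}) * (real CARD('n) / N) = cmod (\<Sum>i<N. cinner (F i) (G i))"
    using N by (simp add: is_dual_sum_cinner[OF assms(1)])
  also have "\<dots> \<le> (\<Sum>i<N. r i)"
    unfolding r_def by (rule norm_sum)
  finally have "real N * (real CARD('n) / N) powr p \<le> (\<Sum>i<N. r i powr p)"
    using sum_powr_ge_card_mult_powr[of "{..<N}" r] N assms(2) by (simp add: r_def)
  then have "((real CARD('n) / N) powr p) powr (1 / p) \<le> AE1 p N F G"
    unfolding AE1_def r_def using N assms(2) by (intro powr_mono2) (simp_all add: field_simps)
  then show ?thesis
    using assms(2) by (simp add: powr_powr)
qed

lemma AE1_le_dim_div_length_imp_is_uniform_dual:
  assumes "is_dual N F (G :: nat \<Rightarrow> complex ^ 'n)" "1 < p"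
    and "AE1 p N F G \<le> real CARD('n) / N"
  shows "is_uniform_dual N F G"
proof -
  define r where "r i = cmod (cinner (F i) (G i))" for i
  define a where "a = real CARD('n) / N"
  have N: "0 < N"
    using assms(1) by (rule is_dual_imp_pos)
  have sum_r: "real (card {..<N}) * a \<le> (\<Sum>i<N. r i)"
    using N norm_sum[of "\<lambda>i. cinner (F i) (G i)" "{..<N}"]
    by (simp add: a_def r_def is_dual_sum_cinner[OF assms(1)])
  have "(1 / N * (\<Sum>i<N. r i powr p)) = AE1 p N F G powr p"
    unfolding AE1_def r_def using assms(2) by (simp add: powr_powr sum_nonneg)
  also have "\<dots> \<le> a powr p"
    using assms(2,3) dim_div_length_le_AE1[OF assms(1,2)] N by (intro powr_mono2) (simp_all add: a_def)
  finally have "(\<Sum>i<N. r i powr p) \<le> real (card {..<N}) * a powr p"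
    using N by (simp add: field_simps)
  then have "\<forall>i<N. r i = a"
    using sum_powr_gt_card_mult_powr[of "{..<N}" r a p] sum_r N assms(2)
    by (force simp: a_def r_def)
  then have "\<forall>i<N. cinner (F i) (G i) = of_real a"
    using sum_eq_of_real_card_mult_imp_const[of "{..<N}" "\<lambda>i. cinner (F i) (G i)" a] N
    by (simp add: r_def a_def is_dual_sum_cinner[OF assms(1)])
  with assms(1) show ?thesis
    unfolding is_uniform_dual_def by blast
qed

theorem proposition5p1:
  fixes F G :: "nat \<Rightarrow> complex ^ 'n" and N :: nat and p :: real
  assumes "is_frame N F"
    and "\<exists>G0. is_uniform_dual N F G0"
    and "p > 1"
    and "is_dual N F G"
  shows "spectrally_optimal_dual p N F G \<longleftrightarrow> is_uniform_dual N F G"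
proof
  obtain G0 where G0: "is_uniform_dual N F G0"
    using assms(2) by blast
  assume "spectrally_optimal_dual p N F G"
  then have "AE1 p N F G \<le> AE1 p N F G0"
    using G0 unfolding spectrally_optimal_dual_def is_uniform_dual_def by blast
  also have "\<dots> = real CARD('n) / N"
    using AE1_is_uniform_dual[OF G0] assms(3) by simp
  finally show "is_uniform_dual N F G"
    using AE1_le_dim_div_length_imp_is_uniform_dual assms(3,4) by blast
next
  assume "is_uniform_dual N F G"
  then have "AE1 p N F G = real CARD('n) / N"
    using assms(3) by (intro AE1_is_uniform_dual) simp_all
  moreover have "real CARD('n) / N \<le> AE1 p N F G'" if "is_dual N F G'" for G'
    using that assms(3) by (rule dim_div_length_le_AE1)
  ultimately show "spectrally_optimal_dual p N F G"
    unfolding spectrally_optimal_dual_def using assms(4) by simp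
qed

end
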